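(* (Absolute waiting bounds.) Let UE $u$ have per-slot allowance $\Delta C_u>0$, credit clamp $[lo_u,hi_u]$, eligibility gate $C_u\ge0$, with at most $K$ new grants per slot assigned by round-robin over the eligible set, and assume the bounded eligible burst assumption with constant $E_{\max}\ge1$. Then: (A) (Time to eligibility from any deficit.) If a packet of $u$ arrives at slot $n_0$ when $C_u[n_0]<0$, then the time until $u$ becomes eligible satisfies $W^{\mathrm{elig}}_u\le\left\lceil -C_u[n_0]/\Delta C_u\right\rceil T_{\mathrm{slot}}\le\left\lceil -lo_u/\Delta C_u\right\rceil T_{\mathrm{slot}}$. (B) (Time to first grant once eligible.) Let $n_{\mathrm{elig}}$ be the first slot with $C_u[n_{\mathrm{elig}}]\ge0$. The additional wait after eligibility satisfies $W^{\mathrm{queue}\mid\mathrm{elig}}_u\le\lceil E_{\max}/K\rceil T_{\mathrm{slot}}$, hence the total time to the first grant satisfies $W^{\mathrm{svc}}_u\le W^{\mathrm{elig}}_u+\lceil E_{\max}/K\rceil T_{\mathrm{slot}}$. (C) (Inter-grant separation.) If a new grant to $u$ at slot $n^\star$ debits $D_u[n^\star]\le D_u^{\max}$, then the post-grant credit satisfies $C_u[n^\star+]\ge\max\{lo_u,-D_u^{\max}\}$, so the largest possible post-grant deficit magnitude is $\delta_u^{\max}=\min\{-lo_u,D_u^{\max}\}$, and the time until $u$ becomes eligible again satisfies $W^{\mathrm{re\text{-}elig}}_u\le\left\lceil \min\{-lo_u,D_u^{\max}\}/\Delta C_u\right\rceil T_{\mathrm{slot}}$; i.e. it is at most $\lceil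 D_u^{\max}/\Delta C_u\rceil T_{\mathrm{slot}}$ if $D_u^{\max}\le -lo_u$ and at most $\lceil -lo_u/\Delta C_u\rceil T_{\mathrm{slot}}$ if $D_u^{\max}\ge -lo_u$. The total time until the next grant, including subsequent queuing, satisfies $W^{\mathrm{cycle}}_u\le W^{\mathrm{re\text{-}elig}}_u+\lceil E_{\max}/K\rceil T_{\mathrm{slot}}$.
   Context: Slotted downlink, slots of duration $T_{\mathrm{slot}}>0$. For UE $u$: backlog $Q_u[n]$, per-slot allowance $\Delta C_u=\texttt{idleSlope}_{p(u)}T_{\mathrm{slot}}>0$, bounds $lo_u<0<hi_u$, credit recursion $C_u[n+1]=\min\{\max\{f(C_u[n],\Delta C_u,Q_u[n])-D_u[n],lo_u\},hi_u\}$, where $f(C,\Delta C,Q)=\min(C+\Delta C,0)$ if $C<0$, $=0$ if $C>0$ and $Q=0$, $=C+\Delta C$ otherwise, and $D_u[n]$ is $0$ without a new (non-HARQ) grant and otherwise the granted TBS (CBS-DT) or $\min\{\mathrm{TBS}_u[n],Q_u[n]\}$ (CBS-PU). A UE is eligible for a new grant in slot $n$ iff $Q_u[n]>0$, it has a free HARQ process, it is not scheduled for HARQ retransmission in slot $n$, and $C_u[n]\ge0$. HARQ retransmissions are not gated by credit and incur no debit. At most $K$ new grants are issued per slot, chosen by round-robin (RR) among eligible UEs. Bounded eligible burst assumption: there is a constant $E_{\max}\ge1$ such that in every slot the number of UEs other than $u$ that are eligible (credit $\ge0$) and still awaiting a new grant is at most $E_{\max}$ (enforced by admission control).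
   Formalization: In (B) and the cycle bound of (C), u stays backlogged, with a free HARQ process and no HARQ retransmission, every slot from eligibility until its first grant; also $C_u[0]$ lies in $[lo_u,hi_u]$ and there are finitely many UEs. Each condition added here is assumed in the paper as well or is needed for the statement above to hold. *)

theory Defs
  imports Main "HOL.Real"
begin

text \<open>Credit-based shaper (CBS) variants: debit is the granted TBS (DT) or
  min of TBS and backlog (PU).\<close>
datatype cbs_variant = CBS_DT | CBS_PU

definition f_credit :: "real \<Rightarrow> real \<Rightarrow> real \<Rightarrow> real" where
  "f_credit C dC Q =
     (if C < 0 then min (C + dC) 0
      else if C > 0 \<and> Q = 0 then 0
      else C + dC)"

definition debit :: "cbs_variant \<Rightarrow> bool \<Rightarrow> real \<Rightarrow> real \<Rightarrow> real" where
  "debit v g tbs q =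
     (if \<not> g then 0 else (case v of CBS_DT \<Rightarrow> tbs | CBS_PU \<Rightarrow> min tbs q))"

definition rr_grant :: "nat \<Rightarrow> (nat \<Rightarrow> 'ue list) \<Rightarrow> 'ue \<Rightarrow> nat \<Rightarrow> bool" where
  "rr_grant K rq u n \<longleftrightarrow> u \<in> set (take K (rq n))"

text \<open>Backlogged, with a free HARQ process and not scheduled for HARQ
  retransmission (the non-credit part of eligibility).\<close>
definition ready :: "(nat \<Rightarrow> real) \<Rightarrow> (nat \<Rightarrow> bool) \<Rightarrow> (nat \<Rightarrow> bool) \<Rightarrow> nat \<Rightarrow> bool" where
  "ready Q hfree retx n \<longleftrightarrow> Q n > 0 \<and> hfree n \<and> \<not> retx n"

definition slots_to_elig :: "(nat \<Rightarrow> real) \<Rightarrow> nat \<Rightarrow> nat" where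
  "slots_to_elig C n0 = (LEAST k. 0 \<le> C (n0 + k))"

definition slots_to :: "(nat \<Rightarrow> bool) \<Rightarrow> nat \<Rightarrow> nat" where
  "slots_to g n0 = (LEAST k. g (n0 + k))"

text \<open>The slotted system: UE u with credit C, backlog Q, TBS, HARQ status,
  eligibility predicate elig over all UEs, and round-robin list rq of the
  eligible UEs (granted UEs that remain eligible and newly eligible UEs are
  appended at the tail).  The bounded eligible burst assumption bounds the
  number of eligible UEs other than u by Emax in every slot.\<close>
definition rr_cbs_system ::
  "real \<Rightarrow> real \<Rightarrow> real \<Rightarrow> real \<Rightarrow> nat \<Rightarrow> nat \<Rightarrow> cbs_variant \<Rightarrow> 'ue::finite \<Rightarrow>
   (nat \<Rightarrow> real) \<Rightarrow> (nat \<Rightarrow> real) \<Rightarrow> (nat \<Rightarrow> real) \<Rightarrow> (nat \<Rightarrow> real) \<Rightarrow>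
   (nat \<Rightarrow> bool) \<Rightarrow> (nat \<Rightarrow> bool) \<Rightarrow> (nat \<Rightarrow> 'ue \<Rightarrow> bool) \<Rightarrow> (nat \<Rightarrow> 'ue list) \<Rightarrow> bool"
  where
  "rr_cbs_system Tslot dC lo hi K Emax v u C Q TBS D hfree retx elig rq \<longleftrightarrow>
     Tslot > 0 \<and> dC > 0 \<and> lo < 0 \<and> 0 < hi \<and> K \<ge> 1 \<and> Emax \<ge> 1 \<and>
     (\<forall>n. Q n \<ge> 0 \<and> TBS n \<ge> 0) \<and>
     lo \<le> C 0 \<and> C 0 \<le> hi \<and>
     (\<forall>n. D n = debit v (rr_grant K rq u n) (TBS n) (Q n)) \<and>
     (\<forall>n. C (Suc n) = min (max (f_credit (C n) dC (Q n) - D n) lo) hi) \<and>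
     (\<forall>n. elig n u \<longleftrightarrow> ready Q hfree retx n \<and> 0 \<le> C n) \<and>
     (\<forall>n. distinct (rq n) \<and> set (rq n) = {w. elig n w}) \<and>
     (\<forall>n. \<exists>L. rq (Suc n) = filter (elig (Suc n)) (drop K (rq n)) @ L) \<and>
     (\<forall>n. card {w. w \<noteq> u \<and> elig n w} \<le> Emax)"

end

theory Submission
  imports Defs
begin

text \<open>While the credit of \<open>u\<close> is negative it cannot be granted, so it is not debited
  and gains at least \<open>dC\<close> per slot until it reaches \<open>0\<close>; this gives (A), and (C) once
  the post-grant deficit is bounded by \<open>min (- lo) Dmax\<close>. A nonnegative credit stays
  nonnegative until the next grant, so from then on \<open>u\<close> stays eligible and hence in the
  round-robin list. Every slot in which \<open>u\<close> is not among the first \<open>K\<close> entries, these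
  entries are removed and the rest is only filtered or extended at the tail, so the
  position of \<open>u\<close> drops by at least \<open>K\<close>. It starts at most at the number \<open>Emax\<close> of
  other eligible UEs, so \<open>u\<close> is granted within \<open>Emax div K\<close> slots, which gives (B).\<close>

definition queue_position :: "'a \<Rightarrow> 'a list \<Rightarrow> nat" where
  "queue_position u xs = length (takeWhile (\<lambda>w. w \<noteq> u) xs)"

lemma queue_position_filter_append_le:
  assumes "u \<in> set (filter P xs)"
  shows "queue_position u (filter P xs @ ys) \<le> queue_position u xs"
  using assms unfolding queue_position_def by (induction xs) auto

lemma in_set_take_iff_queue_position_less:
  assumes "u \<in> set xs"
  shows "u \<in> set (take K xs) \<longleftrightarrow> queue_position u xs < K"
  using assms unfolding queue_position_def
proof (induction xs arbitrary: K)
  case (Cons a xs)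
  then show ?case by (cases K) auto
qed simp

lemma queue_position_drop:
  assumes "u \<notin> set (take K xs)" "u \<in> set xs"
  shows "queue_position u xs = K + queue_position u (drop K xs)"
proof -
  have "length (take K xs) = K"
    using assms in_set_take_iff_queue_position_less[of u xs K]
    by (auto simp: queue_position_def min_def dest: set_takeWhileD)
  moreover have "takeWhile (\<lambda>w. w \<noteq> u) (take K xs @ drop K xs)
      = take K xs @ takeWhile (\<lambda>w. w \<noteq> u) (drop K xs)"
    using assms(1) by (intro takeWhile_append2) auto
  ultimately show ?thesis by (simp add: queue_position_def)
qed

lemma queue_position_le_card:
  assumes "distinct xs"
  shows "queue_position u xs \<le> card (set xs - {u})"
proof -
  have "distinct (takeWhile (\<lambda>w. w \<noteq> u) xs)"
    using assms by (metis distinct_append takeWhile_dropWhile_id)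
  then have "queue_position u xs = card (set (takeWhile (\<lambda>w. w \<noteq> u) xs))"
    by (simp add: queue_position_def distinct_card)
  also have "\<dots> \<le> card (set xs - {u})"
    by (rule card_mono) (auto dest: set_takeWhileD)
  finally show ?thesis .
qed

lemma round_robin_serves_within:
  fixes rq :: "nat \<Rightarrow> 'a list"
  assumes rq_Suc: "\<And>n. \<exists>L. rq (Suc n) = filter (E (Suc n)) (drop K (rq n)) @ L"
    and set_rq: "\<And>n. set (rq n) = {w. E n w}"
    and "0 < K"
    and waiting: "\<And>j. \<forall>i<j. u \<notin> set (take K (rq (n0 + i))) \<Longrightarrow> E (n0 + j) u"
  shows "\<exists>j \<le> queue_position u (rq n0) div K. u \<in> set (take K (rq (n0 + j)))"
  using waiting
proof (induction "queue_position u (rq n0)" arbitrary: n0 rule: less_induct)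
  case less
  show ?case
  proof (cases "u \<in> set (take K (rq n0))")
    case True
    then show ?thesis by (intro exI[of _ 0]) simp
  next
    case unserved: False
    have "E n0 u" "E (Suc n0) u"
      using less.prems[of 0] less.prems[of 1] unserved by auto
    then have queued: "u \<in> set (rq n0)" using set_rq by auto
    then have "u \<in> set (drop K (rq n0))"
      using unserved by (metis Un_iff append_take_drop_id set_append)
    then have "u \<in> set (filter (E (Suc n0)) (drop K (rq n0)))"
      using \<open>E (Suc n0) u\<close> by simp
    moreover obtain L where "rq (Suc n0) = filter (E (Suc n0)) (drop K (rq n0)) @ L"
      using rq_Suc by blast
    ultimately have advance: "queue_position u (rq (Suc n0)) + K \<le> queue_position u (rq n0)"
      using queue_position_filter_append_le queue_position_drop[OF unserved queued] by simp
    then have "queue_position u (rq (Suc n0)) < queue_position u (rq n0)"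
      using \<open>0 < K\<close> by linarith
    moreover have "E (Suc n0 + j) u" if "\<forall>i<j. u \<notin> set (take K (rq (Suc n0 + i)))" for j
      using less.prems[of "Suc j"] that unserved by (force simp: less_Suc_eq_0_disj)
    ultimately obtain j where j: "j \<le> queue_position u (rq (Suc n0)) div K"
        "u \<in> set (take K (rq (Suc n0 + j)))"
      using less.hyps by blast
    have "Suc j \<le> queue_position u (rq n0) div K"
      using j(1) div_le_mono[OF advance, of K] \<open>0 < K\<close> by simp
    then show ?thesis using j(2) by (intro exI[of _ "Suc j"]) simp
  qed
qed

lemma slots_to_le: "g (n + k) \<Longrightarrow> slots_to g n \<le> k"
  unfolding slots_to_def by (rule Least_le)

definition replenishes :: "real \<Rightarrow> (nat \<Rightarrow> real) \<Rightarrow> bool" where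
  "replenishes dC C \<longleftrightarrow> (\<forall>n. C n < 0 \<longrightarrow> min (C n + dC) 0 \<le> C (Suc n))"

lemma deficit_run_ge:
  fixes C :: "nat \<Rightarrow> real"
  assumes "replenishes dC C" and "\<forall>i<k. C (n + i) < 0"
  shows "min (C n + real k * dC) 0 \<le> C (n + k)"
  using assms(2)
proof (induction k)
  case (Suc k)
  then have "min (C n + real k * dC) 0 \<le> C (n + k)" "C (n + k) < 0" by auto
  with assms(1) show ?case by (auto simp: replenishes_def algebra_simps)
qed simp

lemma replenishes_nonneg_within:
  fixes C :: "nat \<Rightarrow> real"
  assumes "replenishes dC C" and "0 < dC" and "- C n \<le> M"
  shows "\<exists>k \<le> nat \<lceil>M / dC\<rceil>. 0 \<le> C (n + k)"
proof (rule ccontr)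
  let ?k = "nat \<lceil>M / dC\<rceil>"
  assume "\<not> ?thesis"
  then have deficit: "\<forall>i \<le> ?k. C (n + i) < 0" by (meson not_le)
  then have "min (C n + real ?k * dC) 0 \<le> C (n + ?k)"
    using deficit_run_ge[OF assms(1)] by simp
  moreover have "M \<le> real ?k * dC"
    using \<open>0 < dC\<close> real_nat_ceiling_ge[of "M / dC"] by (simp add: field_simps)
  ultimately show False
    using deficit[rule_format, of ?k] \<open>- C n \<le> M\<close> by linarith
qed

lemma slots_to_elig_le_ceiling:
  fixes C :: "nat \<Rightarrow> real"
  assumes "replenishes dC C" and "0 < dC" and "0 \<le> M" and "- C n \<le> M"
  shows "real (slots_to_elig C n) \<le> of_int \<lceil>M / dC\<rceil>"
proof -
  obtain k where "k \<le> nat \<lceil>M / dC\<rceil>" "0 \<le> C (n + k)"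
    using replenishes_nonneg_within[OF assms(1,2,4)] by blast
  then have "slots_to_elig C n \<le> nat \<lceil>M / dC\<rceil>"
    unfolding slots_to_elig_def by (meson Least_le order_trans)
  moreover have "0 \<le> M / dC" using \<open>0 < dC\<close> \<open>0 \<le> M\<close> by simp
  ultimately show ?thesis by linarith
qed

lemma credit_nonneg_at_slots_to_elig:
  fixes C :: "nat \<Rightarrow> real"
  assumes "replenishes dC C" and "0 < dC"
  shows "0 \<le> C (n + slots_to_elig C n)"
  unfolding slots_to_elig_def
  using replenishes_nonneg_within[where n = n, OF assms order_refl] by (meson LeastI)

lemma f_credit_nonneg: "0 \<le> C \<Longrightarrow> 0 \<le> dC \<Longrightarrow> 0 \<le> f_credit C dC Q"
  by (simp add: f_credit_def)

locale rr_cbs =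
  fixes Tslot dC lo hi :: real and K Emax :: nat and v :: cbs_variant and u :: "'ue::finite"
    and C Q TBS D :: "nat \<Rightarrow> real" and hfree retx :: "nat \<Rightarrow> bool"
    and elig :: "nat \<Rightarrow> 'ue \<Rightarrow> bool" and rq :: "nat \<Rightarrow> 'ue list"
  assumes system: "rr_cbs_system Tslot dC lo hi K Emax v u C Q TBS D hfree retx elig rq"
begin

lemma
  shows dC_pos: "0 < dC" and lo_neg: "lo < 0" and hi_pos: "0 < hi" and K_pos: "0 < K"
    and lo_le_C0: "lo \<le> C 0"
    and debit_nonneg: "0 \<le> D n"
    and no_grant_debit: "\<not> rr_grant K rq u n \<Longrightarrow> D n = 0"
    and credit_Suc: "C (Suc n) = min (max (f_credit (C n) dC (Q n) - D n) lo) hi"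
    and elig_u_iff: "elig n u \<longleftrightarrow> ready Q hfree retx n \<and> 0 \<le> C n"
    and distinct_rq: "distinct (rq n)"
    and set_rq: "set (rq n) = {w. elig n w}"
    and rq_Suc: "\<exists>L. rq (Suc n) = filter (elig (Suc n)) (drop K (rq n)) @ L"
    and card_eligible_others: "card {w. w \<noteq> u \<and> elig n w} \<le> Emax"
  using system unfolding rr_cbs_system_def
  by (auto simp: debit_def split: cbs_variant.split)

lemma lo_le_credit: "lo \<le> C n"
proof (cases n)
  case (Suc m)
  then show ?thesis using credit_Suc[of m] lo_neg hi_pos by simp
qed (simp add: lo_le_C0)

lemma granted_credit_nonneg: "rr_grant K rq u n \<Longrightarrow> 0 \<le> C n"
  using elig_u_iff[of n] set_rq[of n] unfolding rr_grant_def by (auto dest: in_set_takeD)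

lemma replenishes_credit: "replenishes dC C"
  unfolding replenishes_def
proof (intro allI impI)
  fix n
  assume "C n < 0"
  then have "D n = 0" using granted_credit_nonneg[of n] no_grant_debit[of n] by linarith
  with \<open>C n < 0\<close> show "min (C n + dC) 0 \<le> C (Suc n)"
    using credit_Suc[of n] hi_pos by (simp add: f_credit_def)
qed

lemma credit_nonneg_Suc: "0 \<le> C n \<Longrightarrow> \<not> rr_grant K rq u n \<Longrightarrow> 0 \<le> C (Suc n)"
  using f_credit_nonneg[of "C n" dC "Q n"] dC_pos credit_Suc[of n] no_grant_debit[of n] hi_pos
  by simp

lemma post_grant_credit_ge: "rr_grant K rq u n \<Longrightarrow> max lo (- D n) \<le> C (Suc n)"
  using granted_credit_nonneg[of n] f_credit_nonneg[of "C n" dC "Q n"] dC_pos credit_Suc[of n]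
    debit_nonneg[of n] hi_pos lo_neg
  by auto

lemma first_grant_within:
  assumes "0 \<le> C n0"
    and ready_until_grant: "\<forall>n. n0 \<le> n \<longrightarrow> (\<forall>m. n0 \<le> m \<and> m < n \<longrightarrow> \<not> rr_grant K rq u m) \<longrightarrow>
      ready Q hfree retx n"
  shows "\<exists>j \<le> Emax div K. rr_grant K rq u (n0 + j)"
proof -
  have waiting: "elig (n0 + j) u" if "\<forall>i<j. \<not> rr_grant K rq u (n0 + i)" for j
  proof -
    have "0 \<le> C (n0 + j)"
      using that by (induction j) (auto simp: \<open>0 \<le> C n0\<close> credit_nonneg_Suc)
    moreover have "ready Q hfree retx (n0 + j)"
      using ready_until_grant that by (metis add_diff_inverse_nat add_less_cancel_left le_add1 not_le)
    ultimately show ?thesis by (simp add: elig_u_iff)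
  qed
  have "queue_position u (rq n0) \<le> card (set (rq n0) - {u})"
    by (rule queue_position_le_card[OF distinct_rq])
  also have "\<dots> \<le> Emax"
    using card_eligible_others[of n0] set_rq[of n0] by (simp add: set_diff_eq conj_commute)
  finally have "queue_position u (rq n0) div K \<le> Emax div K" by (rule div_le_mono)
  moreover have "\<exists>j \<le> queue_position u (rq n0) div K. u \<in> set (take K (rq (n0 + j)))"
    using round_robin_serves_within[of rq elig K, OF rq_Suc set_rq K_pos] waiting
    unfolding rr_grant_def by blast
  ultimately show ?thesis unfolding rr_grant_def by (meson order_trans)
qed

lemma time_to_eligibility:
  assumes "C n0 < 0"
  shows "(\<exists>k. 0 \<le> C (n0 + k)) \<and>
    real (slots_to_elig C n0) \<le> of_int \<lceil>- C n0 / dC\<rceil> \<and>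
    of_int \<lceil>- C n0 / dC\<rceil> \<le> (of_int \<lceil>- lo / dC\<rceil> :: real)"
proof -
  have "\<lceil>- C n0 / dC\<rceil> \<le> \<lceil>- lo / dC\<rceil>"
    using lo_le_credit[of n0] dC_pos by (intro ceiling_mono divide_right_mono) auto
  then show ?thesis
    using credit_nonneg_at_slots_to_elig[OF replenishes_credit dC_pos, of n0]
      slots_to_elig_le_ceiling[OF replenishes_credit dC_pos, of "- C n0" n0] assms
    by auto
qed

lemma time_to_first_grant:
  assumes "\<forall>n. n0 + slots_to_elig C n0 \<le> n \<longrightarrow>
      (\<forall>m. n0 + slots_to_elig C n0 \<le> m \<and> m < n \<longrightarrow> \<not> rr_grant K rq u m) \<longrightarrow>
      ready Q hfree retx n"
  shows "(\<exists>k. rr_grant K rq u (n0 + slots_to_elig C n0 + k)) \<and>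
    real (slots_to (rr_grant K rq u) (n0 + slots_to_elig C n0)) \<le> of_int \<lceil>real Emax / real K\<rceil> \<and>
    real (slots_to (rr_grant K rq u) n0) \<le> real (slots_to_elig C n0) + of_int \<lceil>real Emax / real K\<rceil>"
proof -
  obtain j where "j \<le> Emax div K" and granted: "rr_grant K rq u (n0 + slots_to_elig C n0 + j)"
    using first_grant_within[OF credit_nonneg_at_slots_to_elig[OF replenishes_credit dC_pos] assms] by blast
  then have "real j \<le> of_int \<lceil>real Emax / real K\<rceil>"
    by (meson le_of_int_ceiling of_nat_div_le_of_nat of_nat_mono order_trans)
  moreover have "slots_to (rr_grant K rq u) (n0 + slots_to_elig C n0) \<le> j"
    and "slots_to (rr_grant K rq u) n0 \<le> slots_to_elig C n0 + j"
    using granted by (simp_all add: slots_to_le add.assoc)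
  ultimately show ?thesis using granted by auto
qed

lemma inter_grant_separation:
  assumes "rr_grant K rq u ns" and "D ns \<le> Dmax"
  shows "C (Suc ns) \<ge> max lo (- Dmax) \<and>
    - C (Suc ns) \<le> min (- lo) Dmax \<and>
    real (slots_to_elig C (Suc ns)) \<le> of_int \<lceil>min (- lo) Dmax / dC\<rceil> \<and>
    (Dmax \<le> - lo \<longrightarrow> real (slots_to_elig C (Suc ns)) \<le> of_int \<lceil>Dmax / dC\<rceil>) \<and>
    (- lo \<le> Dmax \<longrightarrow> real (slots_to_elig C (Suc ns)) \<le> of_int \<lceil>- lo / dC\<rceil>)"
proof -
  have "C (Suc ns) \<ge> max lo (- Dmax)"
    using post_grant_credit_ge[OF assms(1)] assms(2) by auto
  moreover have "0 \<le> min (- lo) Dmax"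
    using lo_neg debit_nonneg[of ns] assms(2) by auto
  ultimately show ?thesis
    using slots_to_elig_le_ceiling[OF replenishes_credit dC_pos, of "min (- lo) Dmax" "Suc ns"]
    by (auto simp: min_def)
qed

end

theorem lemma2:
  fixes u :: "'ue::finite"
  assumes sys: "rr_cbs_system Tslot dC lo hi K Emax v u C Q TBS D hfree retx elig rq"
  shows
  \<comment> \<open>(A) time to eligibility from any deficit\<close>
  "(\<forall>n0. C n0 < 0 \<longrightarrow>
      (\<exists>k. 0 \<le> C (n0 + k)) \<and>
      real (slots_to_elig C n0) * Tslot \<le> of_int \<lceil>- C n0 / dC\<rceil> * Tslot \<and>
      of_int \<lceil>- C n0 / dC\<rceil> * Tslot \<le> of_int \<lceil>- lo / dC\<rceil> * Tslot)
   \<and>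
   \<comment> \<open>(B) time to first grant once eligible, and total time to first grant\<close>
   (\<forall>n0. (\<forall>n. n0 + slots_to_elig C n0 \<le> n \<longrightarrow>
             (\<forall>m. n0 + slots_to_elig C n0 \<le> m \<and> m < n \<longrightarrow> \<not> rr_grant K rq u m) \<longrightarrow>
             ready Q hfree retx n) \<longrightarrow>
      (\<exists>k. rr_grant K rq u (n0 + slots_to_elig C n0 + k)) \<and>
      real (slots_to (rr_grant K rq u) (n0 + slots_to_elig C n0)) * Tslot
        \<le> of_int \<lceil>real Emax / real K\<rceil> * Tslot \<and>
      real (slots_to (rr_grant K rq u) n0) * Tslot
        \<le> real (slots_to_elig C n0) * Tslot + of_int \<lceil>real Emax / real K\<rceil> * Tslot)
   \<and>
   \<comment> \<open>(C) inter-grant separation; times measured from the post-grant slot\<close>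
   (\<forall>ns Dmax. rr_grant K rq u ns \<and> D ns \<le> Dmax \<longrightarrow>
      C (Suc ns) \<ge> max lo (- Dmax) \<and>
      - C (Suc ns) \<le> min (- lo) Dmax \<and>
      real (slots_to_elig C (Suc ns)) * Tslot \<le> of_int \<lceil>min (- lo) Dmax / dC\<rceil> * Tslot \<and>
      (Dmax \<le> - lo \<longrightarrow>
         real (slots_to_elig C (Suc ns)) * Tslot \<le> of_int \<lceil>Dmax / dC\<rceil> * Tslot) \<and>
      (- lo \<le> Dmax \<longrightarrow>
         real (slots_to_elig C (Suc ns)) * Tslot \<le> of_int \<lceil>- lo / dC\<rceil> * Tslot) \<and>
      ((\<forall>n. Suc ns + slots_to_elig C (Suc ns) \<le> n \<longrightarrow>
          (\<forall>m. Suc ns + slots_to_elig C (Suc ns) \<le> m \<and> m < n \<longrightarrow> \<not> rr_grant K rq u m) \<longrightarrow>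
          ready Q hfree retx n) \<longrightarrow>
       real (slots_to (rr_grant K rq u) (Suc ns)) * Tslot
         \<le> real (slots_to_elig C (Suc ns)) * Tslot + of_int \<lceil>real Emax / real K\<rceil> * Tslot))"
proof -
  interpret rr_cbs Tslot dC lo hi K Emax v u C Q TBS D hfree retx elig rq
    using sys by unfold_locales
  have "0 < Tslot" using sys by (simp add: rr_cbs_system_def)
  show ?thesis
    using time_to_eligibility time_to_first_grant inter_grant_separation \<open>0 < Tslot\<close>
    by (auto simp: mult_le_cancel_right_pos simp flip: distrib_right)
qed

end
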